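(* Let $n\ge 2$ and $q\ge 2$ be integers and put $S_1=\sqrt{q^2+4(q-1)(n-2)}$. Let $d$ be an integer and define $j$ by $d=n-1-\frac{n-2+j}{q}$ (so $j=q(n-1-d)-n+2$), and assume $j\in\left[0,\frac{S_1-q}{2}\right)$. Put $s=1-\frac{2d}{n}$, $d_0=n-\frac{j(n-1)}{q(j+q-1)}$, and let $e$ be the unique rational number in $(0,1]$ such that $d_0+e$ is an integer. Define $$f(t)=\Big(t+1+\tfrac{2e}{n}-\tfrac{2j(n-1)}{nq(j+q-1)}\Big)\Big(t+1+\tfrac{2(e-1)}{n}-\tfrac{2j(n-1)}{nq(j+q-1)}\Big)(t-s),$$ and write its Krawtchouk expansion as $f(t)=f_0+f_1Q_1^{(n,q)}(t)+f_2Q_2^{(n,q)}(t)+f_3Q_3^{(n,q)}(t)$. Then $f_2>0$.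
   Context: For integers $n,q$ and $0\le i\le n$, the Krawtchouk polynomial is $K_i^{(n,q)}(z)=\sum_{l=0}^{i}(-1)^l(q-1)^{i-l}\binom{z}{l}\binom{n-z}{i-l}$ (a polynomial in $z$ of degree $i$), and the normalized Krawtchouk polynomial is $Q_i^{(n,q)}(t)=\frac{1}{r_i}K_i^{(n,q)}\!\big(\tfrac{n(1-t)}{2}\big)$ with $r_i=(q-1)^i\binom{n}{i}$; every real polynomial of degree $m\le n$ in $t$ has a unique expansion $\sum_{i=0}^m f_iQ_i^{(n,q)}(t)$. *)

theory Defs
  imports Complex_Main
begin

definition kraw :: "nat \<Rightarrow> nat \<Rightarrow> nat \<Rightarrow> real \<Rightarrow> real" where
  "kraw n q i z = (\<Sum>l=0..i. (-1)^l * (real q - 1)^(i-l) * (z gchoose l) * ((real n - z) gchoose (i-l)))"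

definition normkraw :: "nat \<Rightarrow> nat \<Rightarrow> nat \<Rightarrow> real \<Rightarrow> real" where
  "normkraw n q i t = kraw n q i (real n * (1 - t) / 2) / ((real q - 1)^i * real (n choose i))"

end

(*
  Substituting t = 1 - 2z/n turns Q_i into K_i(z)/r_i and f into the cubic
  -(8/n^3) (z - m)(z - m + 1)(z - d) with m = d0 + e.  Since K_i has degree i with
  leading coefficient (-q)^i/i!, the expansion in the K_i is triangular, and comparing
  the coefficients of z^3 and z^2 gives f_2 = 2 r_2 (q c_2 + 3 (n(q-1) - q + 2) c_3)/q^3
  for the cubic c_0 + ... + c_3 z^3.  Its sign is that of q(2m - 1 + d) - 3(n(q-1) - q + 2),
  which is positive because e > 0 and the hypothesis on j says j^2 + jq < (q-1)(n-2),
  which bounds j(n-1)/(j+q-1) by (2n + q - 4 - j)/2.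
*)
theory Submission
  imports Defs
begin

lemma gbinomial_2: "(z::'a::field_char_0) gchoose 2 = z * (z - 1) / 2"
  by (simp add: gbinomial_prod_rev numeral_eq_Suc)

lemma gbinomial_3: "(z::'a::field_char_0) gchoose 3 = z * (z - 1) * (z - 2) / 6"
  by (simp add: gbinomial_prod_rev numeral_eq_Suc field_simps)

lemma cubic_eq_zero_coeffs:
  fixes a0 a1 a2 a3 :: real
  assumes "\<And>z. a0 + a1 * z + a2 * z^2 + a3 * z^3 = 0"
  shows "a0 = 0" "a1 = 0" "a2 = 0" "a3 = 0"
proof -
  have "a0 = 0" "a0 + a1 + a2 + a3 = 0" "a0 + 2*a1 + 4*a2 + 8*a3 = 0" "a0 + 3*a1 + 9*a2 + 27*a3 = 0"
    using assms[of 0] assms[of 1] assms[of 2] assms[of 3] by simp_all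
  then show "a0 = 0" "a1 = 0" "a2 = 0" "a3 = 0" by linarith+
qed

lemma cubic_triangular_expansion_exists:
  fixes c0 c1 c2 c3 k10 k11 k20 k21 k22 k30 k31 k32 k33 :: real
  assumes "k11 \<noteq> 0" "k22 \<noteq> 0" "k33 \<noteq> 0"
  shows "\<exists>g0 g1 g2 g3. \<forall>z. c0 + c1 * z + c2 * z^2 + c3 * z^3
           = g0 + g1 * (k10 + k11 * z) + g2 * (k20 + k21 * z + k22 * z^2)
             + g3 * (k30 + k31 * z + k32 * z^2 + k33 * z^3)"
proof (intro exI allI)
  define g3 where "g3 = c3 / k33"
  define g2 where "g2 = (c2 - g3 * k32) / k22"
  define g1 where "g1 = (c1 - g3 * k31 - g2 * k21) / k11"
  define g0 where "g0 = c0 - g3 * k30 - g2 * k20 - g1 * k10"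
  fix z :: real
  have "c3 = g3 * k33" "c2 = g2 * k22 + g3 * k32" "c1 = g1 * k11 + g2 * k21 + g3 * k31"
    "c0 = g0 + g1 * k10 + g2 * k20 + g3 * k30"
    using assms by (simp_all add: g0_def g1_def g2_def g3_def)
  then show "c0 + c1 * z + c2 * z^2 + c3 * z^3
      = g0 + g1 * (k10 + k11 * z) + g2 * (k20 + k21 * z + k22 * z^2)
        + g3 * (k30 + k31 * z + k32 * z^2 + k33 * z^3)"
    by (simp add: algebra_simps)
qed

lemma cubic_triangular_expansion_coeff2:
  fixes c0 c1 c2 c3 g0 g1 g2 g3 k10 k11 k20 k21 k22 k30 k31 k32 k33 :: real
  assumes "k22 \<noteq> 0" "k33 \<noteq> 0"
    and "\<And>z. c0 + c1 * z + c2 * z^2 + c3 * z^3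
           = g0 + g1 * (k10 + k11 * z) + g2 * (k20 + k21 * z + k22 * z^2)
             + g3 * (k30 + k31 * z + k32 * z^2 + k33 * z^3)"
  shows "g2 = (c2 - c3 * k32 / k33) / k22"
proof -
  have "(c0 - g0 - g1 * k10 - g2 * k20 - g3 * k30) + (c1 - g1 * k11 - g2 * k21 - g3 * k31) * z
      + (c2 - g2 * k22 - g3 * k32) * z^2 + (c3 - g3 * k33) * z^3 = 0" for z
    using assms(3)[of z] by (simp add: algebra_simps)
  from cubic_eq_zero_coeffs(3,4)[OF this] have "c3 = g3 * k33" "c2 = g2 * k22 + g3 * k32"
    by simp_all
  with assms(1,2) show ?thesis by (simp add: field_simps)
qed

lemma quadratic_less_below_positive_root:
  fixes x b c :: real
  assumes "x \<ge> 0" "b \<ge> 0" "x < (sqrt (b^2 + 4 * c) - b) / 2"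
  shows "x^2 + b * x < c"
proof -
  have "0 \<le> 2 * x + b" "2 * x + b < sqrt (b^2 + 4 * c)" using assms by simp_all
  then have "b^2 + 4 * c > 0" by (metis not_less order.strict_trans1 real_sqrt_le_0_iff)
  have "(2 * x + b)^2 < (sqrt (b^2 + 4 * c))^2"
    using \<open>0 \<le> 2 * x + b\<close> \<open>2 * x + b < _\<close> by (intro power_strict_mono) simp_all
  with \<open>b^2 + 4 * c > 0\<close> show ?thesis by (simp add: power2_eq_square algebra_simps)
qed

lemma the_gap_to_next_integer:
  fixes x :: real
  assumes "x \<in> \<rat>"
  shows "(THE e. e \<in> \<rat> \<and> 0 < e \<and> e \<le> 1 \<and> x + e \<in> \<int>) = of_int \<lfloor>x\<rfloor> + 1 - x"
proof (rule the_equality)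
  show "of_int \<lfloor>x\<rfloor> + 1 - x \<in> \<rat> \<and> 0 < of_int \<lfloor>x\<rfloor> + 1 - x \<and> of_int \<lfloor>x\<rfloor> + 1 - x \<le> 1
        \<and> x + (of_int \<lfloor>x\<rfloor> + 1 - x) \<in> \<int>"
    using assms floor_correct[of x] by (auto intro: Rats_diff Rats_add)
next
  fix e
  assume e: "e \<in> \<rat> \<and> 0 < e \<and> e \<le> 1 \<and> x + e \<in> \<int>"
  then obtain k where k: "x + e = of_int k" by (auto elim: Ints_cases)
  have "\<lfloor>x\<rfloor> = k - 1" by (rule floor_unique) (use k e in auto)
  with k show "e = of_int \<lfloor>x\<rfloor> + 1 - x" by simp
qed

(* The coefficients are written as c0 + c1 * z + ... so that they match the
   triangular expansion lemmas syntactically. *)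
lemma kraw_1: "kraw n q 1 z = (real q - 1) * real n + (- real q) * z"
  unfolding kraw_def by (simp add: algebra_simps)

lemma kraw_2: "kraw n q 2 z = (real q - 1)^2 * real n * (real n - 1) / 2
   + ((real q - 1)^2 * (1 - 2 * real n) / 2 - (real q - 1) * real n - 1/2) * z + (real q)^2 / 2 * z^2"
proof -
  have "{0..2::nat} = {0, 1, 2}" by auto
  then show ?thesis unfolding kraw_def by (simp add: gbinomial_2 field_simps power2_eq_square)
qed

lemma kraw_3: "kraw n q 3 z = (real q - 1)^3 * (real n^3 - 3 * real n^2 + 2 * real n) / 6
   + ((real q - 1)^3 * (- 3 * real n^2 + 6 * real n - 2) / 6 - (real q - 1)^2 * (real n^2 - real n) / 2
      - (real q - 1) * real n / 2 - 1/3) * z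
   + (real q)^2 * (real n * (real q - 1) - real q + 2) / 2 * z^2 + (- (real q ^ 3 / 6)) * z^3"
proof -
  have "{0..3::nat} = {0, 1, 2, 3}" by auto
  then show ?thesis unfolding kraw_def
    by (simp add: gbinomial_2 gbinomial_3 field_simps power2_eq_square power3_eq_cube)
qed

lemma normkraw_at_kraw_argument:
  assumes "n > 0"
  shows "normkraw n q i (1 - 2 * z / real n) = kraw n q i z / ((real q - 1)^i * real (n choose i))"
  using assms by (simp add: normkraw_def)

lemma normkraw_cubic_expansion_exists:
  fixes g :: "real \<Rightarrow> real" and c0 c1 c2 c3 :: real
  assumes "n \<ge> 3" "q \<ge> 2"
    and g: "\<And>z. g (1 - 2 * z / real n) = c0 + c1 * z + c2 * z^2 + c3 * z^3"
  shows "\<exists>f0 f1 f2 f3. \<forall>t. g t = f0 + f1 * normkraw n q 1 t + f2 * normkraw n q 2 t + f3 * normkraw n q 3 t"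
proof -
  define r where "r i = (real q - 1)^i * real (n choose i)" for i
  have r_pos: "r i > 0" if "i \<le> 3" for i
    using assms(1,2) that by (simp add: r_def)
  have "q > 0" using assms(2) by simp
  have "\<exists>g0 g1 g2 g3. \<forall>z. c0 + c1 * z + c2 * z^2 + c3 * z^3
      = g0 + g1 * kraw n q 1 z + g2 * kraw n q 2 z + g3 * kraw n q 3 z"
    unfolding kraw_1 kraw_2 kraw_3
    by (rule cubic_triangular_expansion_exists) (use \<open>q > 0\<close> in simp_all)
  then obtain g0 g1 g2 g3 where expansion: "\<And>z. c0 + c1 * z + c2 * z^2 + c3 * z^3
      = g0 + g1 * kraw n q 1 z + g2 * kraw n q 2 z + g3 * kraw n q 3 z"
    by blast
  have "g t = g0 + (g1 * r 1) * normkraw n q 1 t + (g2 * r 2) * normkraw n q 2 t + (g3 * r 3) * normkraw n q 3 t"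
    for t
  proof -
    define z where "z = real n * (1 - t) / 2"
    have t: "t = 1 - 2 * z / real n" using assms(1) by (simp add: z_def)
    have "n > 0" using assms(1) by simp
    show ?thesis
      unfolding t g expansion normkraw_at_kraw_argument[OF \<open>n > 0\<close>] r_def[symmetric]
      using r_pos[of 1] r_pos[of 2] r_pos[of 3] by simp
  qed
  then show ?thesis by blast
qed

lemma normkraw_cubic_expansion_coeff2:
  fixes g :: "real \<Rightarrow> real" and c0 c1 c2 c3 f0 f1 f2 f3 :: real
  assumes "n \<ge> 2" "q \<ge> 2"
    and g: "\<And>z. g (1 - 2 * z / real n) = c0 + c1 * z + c2 * z^2 + c3 * z^3"
    and expansion: "\<And>t. g t = f0 + f1 * normkraw n q 1 t + f2 * normkraw n q 2 t + f3 * normkraw n q 3 t"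
  shows "f2 = (real q - 1)^2 * real (n choose 2) * 2
              * (real q * c2 + 3 * (real n * (real q - 1) - real q + 2) * c3) / real q ^ 3"
proof -
  define r where "r i = (real q - 1)^i * real (n choose i)" for i
  have "r 2 > 0" "q > 0" "n > 0" using assms(1,2) by (simp_all add: r_def)
  have "c0 + c1 * z + c2 * z^2 + c3 * z^3
      = f0 + (f1 / r 1) * kraw n q 1 z + (f2 / r 2) * kraw n q 2 z + (f3 / r 3) * kraw n q 3 z" for z
    using g[of z] expansion[of "1 - 2 * z / real n"]
    unfolding normkraw_at_kraw_argument[OF \<open>n > 0\<close>] r_def[symmetric] by simp
  then have "f2 / r 2 = (c2 - c3 * ((real q)^2 * (real n * (real q - 1) - real q + 2) / 2)
                          / (- (real q ^ 3 / 6))) / ((real q)^2 / 2)"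
    unfolding kraw_1 kraw_2 kraw_3
    by (rule cubic_triangular_expansion_coeff2[rotated 2]) (use \<open>q > 0\<close> in simp_all)
  also have "\<dots> = 2 * (real q * c2 + 3 * (real n * (real q - 1) - real q + 2) * c3) / real q ^ 3"
    using \<open>q > 0\<close> by (simp add: field_simps power2_eq_square power3_eq_cube)
  finally have "f2 = r 2 * (2 * (real q * c2 + 3 * (real n * (real q - 1) - real q + 2) * c3) / real q ^ 3)"
    using \<open>r 2 > 0\<close> by (simp add: divide_eq_eq)
  then show ?thesis by (simp add: r_def)
qed

lemma normkraw_expansion_coeff2_pos:
  fixes g :: "real \<Rightarrow> real" and b D :: real
  assumes "n \<ge> 3" "q \<ge> 2"
    and numerator_pos: "3 * (real n * (real q - 1) - real q + 2) < real q * (2 * (real n + b) - 1 + D)"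
    and g: "\<And>t. g t = (t + 1 + 2 * b / real n) * (t + 1 + 2 * (b - 1) / real n) * (t - (1 - 2 * D / real n))"
  shows "(\<exists>f0 f1 f2 f3. \<forall>t. g t = f0 + f1 * normkraw n q 1 t + f2 * normkraw n q 2 t + f3 * normkraw n q 3 t)
       \<and> (\<forall>f0 f1 f2 f3. (\<forall>t. g t = f0 + f1 * normkraw n q 1 t + f2 * normkraw n q 2 t + f3 * normkraw n q 3 t)
            \<longrightarrow> f2 > 0)"
proof -
  define m a where "m = real n + b" and "a = 8 / real n ^ 3"
  have "n > 0" "a > 0" using assms(1) by (simp_all add: a_def)
  have roots: "g (1 - 2 * z / real n) = - a * ((z - m) * (z - m + 1) * (z - D))" for z
  proof -
    have "g (1 - 2 * z / real n) = (- (2 / real n) * (z - m)) * (- (2 / real n) * (z - m + 1)) * (- (2 / real n) * (z - D))"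
      unfolding g m_def using \<open>n > 0\<close> by (simp add: field_simps)
    then show ?thesis by (simp add: a_def field_simps power3_eq_cube)
  qed
  have cubic: "g (1 - 2 * z / real n) = a * (D * m * (m - 1)) + (- a * (m * (m - 1) + D * (2 * m - 1))) * z
                 + a * (2 * m - 1 + D) * z^2 + (- a) * z^3" for z
    unfolding roots by (simp add: algebra_simps power2_eq_square power3_eq_cube)
  show ?thesis
  proof (intro conjI allI impI)
    show "\<exists>f0 f1 f2 f3. \<forall>t. g t = f0 + f1 * normkraw n q 1 t + f2 * normkraw n q 2 t + f3 * normkraw n q 3 t"
      using normkraw_cubic_expansion_exists[OF assms(1,2) cubic] .
  next
    fix f0 f1 f2 f3
    assume "\<forall>t. g t = f0 + f1 * normkraw n q 1 t + f2 * normkraw n q 2 t + f3 * normkraw n q 3 t"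
    then have "f2 = (real q - 1)^2 * real (n choose 2) * 2
        * (real q * (a * (2 * m - 1 + D)) + 3 * (real n * (real q - 1) - real q + 2) * (- a)) / real q ^ 3"
      using assms(1,2) by (intro normkraw_cubic_expansion_coeff2[OF _ _ cubic]) simp_all
    also have "\<dots> = (real q - 1)^2 * real (n choose 2) * 2 * a
        * (real q * (2 * m - 1 + D) - 3 * (real n * (real q - 1) - real q + 2)) / real q ^ 3"
      by (simp add: algebra_simps)
    also have "\<dots> > 0"
      using assms(1,2) numerator_pos \<open>a > 0\<close> by (simp add: m_def)
    finally show "f2 > 0" .
  qed
qed

lemma coeff2_numerator_pos:
  fixes N Q J e :: real
  assumes "Q \<ge> 2" "J \<ge> 0" "J^2 + J * Q < (Q - 1) * (N - 2)" "e > 0"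
  shows "3 * (N * (Q - 1) - Q + 2)
           < Q * (2 * (N - J * (N - 1) / (Q * (J + Q - 1)) + e) - 1 + (N - 1 - (J + N - 2) / Q))"
proof -
  have "J + Q - 1 > 0" using assms by simp
  have "J \<le> J * Q" "Q * (Q - 1) \<ge> 0" "J^2 \<ge> 0"
    using assms by (simp_all add: mult_le_cancel_left1)
  then have "0 \<le> 2 * ((Q - 1) * (N - 2)) + Q * (Q - 1) - J^2 - J"
    using assms(2,3) by linarith
  also have "\<dots> = (2 * N + Q - 4 - J) * (J + Q - 1) - 2 * (J * (N - 1))"
    by (simp add: algebra_simps power2_eq_square)
  finally have "J * (N - 1) \<le> (2 * N + Q - 4 - J) / 2 * (J + Q - 1)"
    by simp
  then have bound: "J * (N - 1) / (J + Q - 1) \<le> (2 * N + Q - 4 - J) / 2"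
    using \<open>J + Q - 1 > 0\<close> by (simp add: pos_divide_le_eq)
  have expand: "Q * (2 * (N - y + e) - 1 + (N - 1 - z)) = 2 * (Q * N - Q * y) + 2 * Q * e - Q + Q * (N - 1) - Q * z"
    for y z by (simp add: algebra_simps)
  have "Q * (J * (N - 1) / (Q * (J + Q - 1))) = J * (N - 1) / (J + Q - 1)"
    "Q * ((J + N - 2) / Q) = J + N - 2"
    using assms(1) by simp_all
  then have "Q * (2 * (N - J * (N - 1) / (Q * (J + Q - 1)) + e) - 1 + (N - 1 - (J + N - 2) / Q))
      = 2 * (Q * N - J * (N - 1) / (J + Q - 1)) + 2 * Q * e - Q + Q * (N - 1) - (J + N - 2)"
    unfolding expand by simp
  moreover have "Q * e > 0" using assms by simp
  ultimately show ?thesis using bound by (simp add: algebra_simps)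
qed

theorem lemma1:
  fixes n q :: nat and d j :: int and S1 s d0 e :: real and f :: "real \<Rightarrow> real"
  assumes "n \<ge> 2" and "q \<ge> 2"
    and "S1 = sqrt (real q ^ 2 + 4 * (real q - 1) * (real n - 2))"
    and "j = int q * (int n - 1 - d) - int n + 2"
    and "0 \<le> j" and "real_of_int j < (S1 - real q) / 2"
    and "s = 1 - 2 * real_of_int d / real n"
    and "d0 = real n - real_of_int j * (real n - 1) / (real q * (real_of_int j + real q - 1))"
    and "e = (THE e. e \<in> \<rat> \<and> 0 < e \<and> e \<le> 1 \<and> d0 + e \<in> \<int>)"
    and "\<And>t. f t = (t + 1 + 2 * e / real n - 2 * real_of_int j * (real n - 1) / (real n * real q * (real_of_int j + real q - 1)))
                 * (t + 1 + 2 * (e - 1) / real n - 2 * real_of_int j * (real n - 1) / (real n * real q * (real_of_int j + real q - 1)))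
                 * (t - s)"
  shows "(\<exists>f0 f1 f2 f3. \<forall>t. f t = f0 + f1 * normkraw n q 1 t + f2 * normkraw n q 2 t + f3 * normkraw n q 3 t)
       \<and> (\<forall>f0 f1 f2 f3. (\<forall>t. f t = f0 + f1 * normkraw n q 1 t + f2 * normkraw n q 2 t + f3 * normkraw n q 3 t) \<longrightarrow> f2 > 0)"
proof -
  define N Q J Y where "N = real n" and "Q = real q" and "J = real_of_int j"
    and "Y = J * (N - 1) / (Q * (J + Q - 1))"
  have "J \<ge> 0" "Q \<ge> 2" using assms(2,5) by (simp_all add: J_def Q_def)
  have "J < (sqrt (Q^2 + 4 * ((Q - 1) * (N - 2))) - Q) / 2"
    using assms(6) unfolding assms(3) N_def Q_def J_def by (simp only: mult.assoc)
  then have J_bound: "J^2 + J * Q < (Q - 1) * (N - 2)"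
    using quadratic_less_below_positive_root[of J Q] \<open>J \<ge> 0\<close> \<open>Q \<ge> 2\<close> by (simp add: mult.commute)
  moreover have "J^2 + J * Q \<ge> 0" using \<open>J \<ge> 0\<close> \<open>Q \<ge> 2\<close> by simp
  ultimately have "(Q - 1) * (N - 2) > 0" by linarith
  then have "n \<ge> 3" using \<open>Q \<ge> 2\<close> by (simp add: N_def zero_less_mult_iff)
  have "d0 \<in> \<rat>" unfolding assms(8) by (intro Rats_diff Rats_divide Rats_mult Rats_add) simp_all
  then have "e = of_int \<lfloor>d0\<rfloor> + 1 - d0"
    unfolding assms(9) by (rule the_gap_to_next_integer)
  then have "e > 0" using floor_correct[of d0] by simp
  have d_eq: "real_of_int d = N - 1 - (J + N - 2) / Q"
    using arg_cong[OF assms(4), of real_of_int] \<open>Q \<ge> 2\<close> by (simp add: N_def Q_def J_def field_simps)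
  have numerator_pos: "3 * (N * (Q - 1) - Q + 2) < Q * (2 * (N + (e - Y)) - 1 + real_of_int d)"
    using coeff2_numerator_pos[OF \<open>Q \<ge> 2\<close> \<open>J \<ge> 0\<close> J_bound \<open>e > 0\<close>]
    unfolding d_eq Y_def by (simp add: diff_add_eq)
  have Y_term: "2 * real_of_int j * (N - 1) / (N * real q * (real_of_int j + real q - 1)) = 2 * Y / N"
    by (simp add: N_def Q_def J_def Y_def ac_simps)
  have factor: "t + 1 + 2 * x / N - 2 * Y / N = t + 1 + 2 * (x - Y) / N" for t x
    by (simp add: diff_divide_distrib)
  have "e - 1 - Y = e - Y - 1" by simp
  then have f_form: "f t = (t + 1 + 2 * (e - Y) / N) * (t + 1 + 2 * (e - Y - 1) / N) * (t - (1 - 2 * real_of_int d / N))"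
    for t unfolding assms(10) assms(7) Y_term N_def[symmetric] factor by simp
  show ?thesis
    using numerator_pos f_form unfolding N_def Q_def by (rule normkraw_expansion_coeff2_pos[OF \<open>n \<ge> 3\<close> assms(2)])
qed

end
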